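(* Let $n\ge1$, $\beta\ge2(n+2)$ and let $\Pi$ be a parameter set. Let $\mathcal{M}_\beta$ be the set of infinite matrices $A=(A_{ij})_{i,j\ge1}$ whose entries $A_{ij}=A_{ij}(\xi)$ are complex $2\times2$ matrices depending on $\xi\in\Pi$, such that $[A]_\beta<\infty$, where $[A]_\beta$ is the smallest constant with $$\sup_{\xi\in\Pi}\|A_{ij}(\xi)\|_{HS}\le\frac{[A]_\beta}{(1+\ln i)^\beta(1+\ln j)^\beta(1+|i-j|)}\quad\text{for all } i,j\ge1,$$ $\|\cdot\|_{HS}$ denoting the Hilbert–Schmidt norm. Then for $A,B\in\mathcal{M}_\beta$ the product $(A\cdot B)_{jl}=\sum_{k\ge1}A_{jk}B_{kl}$ satisfies $A\cdot B\in\mathcal{M}_\beta$ and $[A\cdot B]_\beta\le C[A]_\beta[B]_\beta$ for a constant $C$ independent of $A,B$. *)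

theory Defs
  imports "HOL-Analysis.Analysis"
begin

definition hs_norm :: "complex^2^2 \<Rightarrow> real" where
  "hs_norm M = sqrt (\<Sum>i\<in>UNIV. \<Sum>j\<in>UNIV. (cmod (M $ i $ j))\<^sup>2)"

text \<open>Infinite matrices indexed by i, j \<ge> 1 (index 0 is ignored), with entries depending
  on a parameter xi of type 'p (the parameter set Pi is the universe of 'p).\<close>

type_synonym 'p inf_mat = "nat \<Rightarrow> nat \<Rightarrow> 'p \<Rightarrow> complex^2^2"

definition weight :: "real \<Rightarrow> nat \<Rightarrow> nat \<Rightarrow> real" where
  "weight \<beta> i j = (1 + ln (real i)) powr \<beta> * (1 + ln (real j)) powr \<beta>
                     * (1 + \<bar>real i - real j\<bar>)"

text \<open>c is an admissible constant in the definition of [A]_beta; the bound on the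
  supremum over xi is written pointwise in xi (equivalent, avoids junk values of SUP).\<close>
definition admissible :: "real \<Rightarrow> 'p inf_mat \<Rightarrow> real \<Rightarrow> bool" where
  "admissible \<beta> A c \<longleftrightarrow>
     (\<forall>i\<ge>1. \<forall>j\<ge>1. \<forall>\<xi>. hs_norm (A i j \<xi>) \<le> c / weight \<beta> i j)"

definition in_M :: "real \<Rightarrow> 'p inf_mat \<Rightarrow> bool" where
  "in_M \<beta> A \<longleftrightarrow> (\<exists>c. admissible \<beta> A c)"

definition M_norm :: "real \<Rightarrow> 'p inf_mat \<Rightarrow> real" where
  "M_norm \<beta> A = Inf {c. admissible \<beta> A c}"

definition inf_mat_mult :: "'p inf_mat \<Rightarrow> 'p inf_mat \<Rightarrow> 'p inf_mat" where
  "inf_mat_mult A B = (\<lambda>j l \<xi>. \<Sum>k. A j (Suc k) \<xi> ** B (Suc k) l \<xi>)"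

end

theory Submission
  imports Defs
begin

text \<open>Writing \<open>L k = 1 + ln k\<close>, the quotient \<open>w(j,l) / (w(j,k) w(k,l))\<close> of weights loses
  the factors \<open>L j, L l\<close> and retains \<open>L k\<^sup>-\<^sup>2\<^sup>\<beta>\<close>, while \<open>1 + |j - l| \<le> (1 + |j - k|) + (1 + |k - l|)\<close>
  leaves a single factor \<open>1/(1 + |k - j|)\<close> or \<open>1/(1 + |k - l|)\<close>.  Splitting according to
  whether \<open>1 + |k - j|\<close> exceeds \<open>k\<^sup>2\<close>, each term is dominated by Bertrand terms
  \<open>1/(m L(m)\<^sup>2)\<close> at \<open>m = k\<close> or \<open>m = 1 + |k - j|\<close>, whose series converges by telescoping
  against \<open>1/L\<close>.  Hence \<open>\<Sum>\<^sub>k 1/(w(j,k) w(k,l)) \<le> C/w(j,l)\<close>, and the Frobenius norm, being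
  submultiplicative, turns this into the bound on the product.\<close>

lemma norm_vec_squared: "(norm (x::'a::real_normed_vector^'n))\<^sup>2 = (\<Sum>i\<in>UNIV. (norm (x $ i))\<^sup>2)"
  unfolding norm_vec_def L2_set_def by (simp add: sum_nonneg)

lemma norm_matrix_mult_le:
  fixes A :: "'a::real_normed_field^'n^'m" and B :: "'a^'p^'n"
  shows "norm (A ** B) \<le> norm A * norm B"
proof -
  have entry: "(norm ((A ** B) $ i $ l))\<^sup>2
      \<le> (\<Sum>k\<in>UNIV. (norm (A $ i $ k))\<^sup>2) * (\<Sum>k\<in>UNIV. (norm (B $ k $ l))\<^sup>2)" for i l
  proof -
    have "norm ((A ** B) $ i $ l) \<le> (\<Sum>k\<in>UNIV. norm (A $ i $ k) * norm (B $ k $ l))"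
      unfolding matrix_matrix_mult_def by (simp add: norm_mult order_trans[OF norm_sum])
    also have "\<dots> \<le> L2_set (\<lambda>k. norm (A $ i $ k)) UNIV * L2_set (\<lambda>k. norm (B $ k $ l)) UNIV"
      using L2_set_mult_ineq[of "\<lambda>k. norm (A $ i $ k)" "\<lambda>k. norm (B $ k $ l)" UNIV] by simp
    finally show ?thesis
      by (rule power_mono[where n=2, THEN order_trans])
         (simp_all add: power_mult_distrib L2_set_def sum_nonneg)
  qed
  have "(norm (A ** B))\<^sup>2 = (\<Sum>i\<in>UNIV. \<Sum>l\<in>UNIV. (norm ((A ** B) $ i $ l))\<^sup>2)"
    by (simp add: norm_vec_squared)
  also have "\<dots> \<le> (\<Sum>i\<in>UNIV. \<Sum>l\<in>UNIV.
                    (\<Sum>k\<in>UNIV. (norm (A $ i $ k))\<^sup>2) * (\<Sum>k\<in>UNIV. (norm (B $ k $ l))\<^sup>2))"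
    by (intro sum_mono entry)
  also have "\<dots> = (\<Sum>i\<in>UNIV. \<Sum>k\<in>UNIV. (norm (A $ i $ k))\<^sup>2)
                 * (\<Sum>l\<in>UNIV. \<Sum>k\<in>UNIV. (norm (B $ k $ l))\<^sup>2)"
    by (simp add: sum_product)
  also have "\<dots> = (\<Sum>i\<in>UNIV. \<Sum>k\<in>UNIV. (norm (A $ i $ k))\<^sup>2)
                 * (\<Sum>k\<in>UNIV. \<Sum>l\<in>UNIV. (norm (B $ k $ l))\<^sup>2)"
    by (subst (2) sum.swap) (rule refl)
  also have "\<dots> = (norm A * norm B)\<^sup>2"
    by (simp add: norm_vec_squared power_mult_distrib)
  finally show ?thesis by (rule power2_le_imp_le) simp
qed

lemma hs_norm_eq_norm: "hs_norm M = norm M"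
  unfolding hs_norm_def norm_vec_def L2_set_def by (simp add: real_sqrt_pow2 sum_nonneg)

definition one_plus_ln :: "nat \<Rightarrow> real" where
  "one_plus_ln k = 1 + ln (real k)"

definition bertrand :: "nat \<Rightarrow> real" where
  "bertrand k = 1 / (real k * (one_plus_ln k)\<^sup>2)"

definition nat_dist :: "nat \<Rightarrow> nat \<Rightarrow> nat" where
  "nat_dist a b = (if b \<le> a then a - b else b - a)"

lemma one_plus_ln_ge_one: "k \<ge> 1 \<Longrightarrow> one_plus_ln k \<ge> 1"
  unfolding one_plus_ln_def by simp

lemma bertrand_nonneg: "bertrand k \<ge> 0"
  unfolding bertrand_def by simp

lemma real_nat_dist: "real (nat_dist a b) = \<bar>real a - real b\<bar>"
  unfolding nat_dist_def by auto

lemma weight_eq: "weight \<beta> i j = one_plus_ln i powr \<beta> * one_plus_ln j powr \<beta> * (1 + real (nat_dist i j))"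
  unfolding weight_def one_plus_ln_def real_nat_dist ..

lemma weight_pos: "i \<ge> 1 \<Longrightarrow> j \<ge> 1 \<Longrightarrow> weight \<beta> i j > 0"
  unfolding weight_eq using one_plus_ln_ge_one[of i] one_plus_ln_ge_one[of j] by simp

lemma inverse_Suc_le_ln_diff:
  assumes "N \<ge> 1"
  shows "1 / real (Suc N) \<le> ln (real (Suc N)) - ln (real N)"
proof -
  have "ln (real N / real (Suc N)) \<le> real N / real (Suc N) - 1"
    using assms by (intro ln_le_minus_one) simp
  moreover have "real N / real (Suc N) - 1 = - (1 / real (Suc N))"
    by (simp add: field_simps)
  ultimately show ?thesis
    using assms by (simp add: ln_div)
qed

lemma bertrand_le_telescope:
  assumes N: "N \<ge> 1"
  shows "bertrand (Suc N) \<le> 1 / one_plus_ln N - 1 / one_plus_ln (Suc N)"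
proof -
  define a where "a = one_plus_ln N"
  define b where "b = one_plus_ln (Suc N)"
  have a1: "a \<ge> 1" using N one_plus_ln_ge_one a_def by auto
  have ab: "a \<le> b" using N unfolding a_def b_def one_plus_ln_def by simp
  have d: "1 / real (Suc N) \<le> b - a"
    using inverse_Suc_le_ln_diff[OF N] unfolding a_def b_def one_plus_ln_def by simp
  have "bertrand (Suc N) = (1 / real (Suc N)) / (b * b)"
    unfolding bertrand_def b_def by (simp add: power2_eq_square)
  also have "\<dots> \<le> (b - a) / (b * b)"
    using d a1 ab by (intro divide_right_mono) auto
  also have "\<dots> \<le> (b - a) / (a * b)"
    using d a1 ab by (intro divide_left_mono mult_right_mono) auto
  also have "\<dots> = 1 / a - 1 / b"
    using a1 ab by (simp add: field_simps)
  finally show ?thesis unfolding a_def b_def .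
qed

lemma sum_bertrand_le_telescoped:
  "N \<ge> 1 \<Longrightarrow> (\<Sum>k<N. bertrand (Suc k)) \<le> 2 - 1 / one_plus_ln N"
proof (induction N rule: dec_induct)
  case base
  then show ?case by (simp add: bertrand_def one_plus_ln_def)
next
  case (step N)
  then show ?case using bertrand_le_telescope[of N] by simp
qed

lemma sum_bertrand_le: "(\<Sum>k<N. bertrand (Suc k)) \<le> 2"
proof (cases "N = 0")
  case False
  then have "N \<ge> 1" by simp
  then show ?thesis
    using sum_bertrand_le_telescoped[of N] one_plus_ln_ge_one[of N]
      divide_nonneg_nonneg[of 1 "one_plus_ln N"] by linarith
qed simp

lemma sum_bertrand_nat_dist_le: "(\<Sum>k<N. bertrand (Suc (nat_dist (Suc k) l))) \<le> 4"
proof -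
  have reindex_le: "(\<Sum>k\<in>K. bertrand (Suc (f k))) \<le> (\<Sum>m<M. bertrand (Suc m))"
    if "inj_on f K" "f ` K \<subseteq> {..<M}" for f :: "nat \<Rightarrow> nat" and K M
  proof -
    have "(\<Sum>k\<in>K. bertrand (Suc (f k))) = (\<Sum>m\<in>f ` K. bertrand (Suc m))"
      using that(1) by (simp add: sum.reindex)
    also have "\<dots> \<le> (\<Sum>m<M. bertrand (Suc m))"
      using that(2) by (intro sum_mono2) (auto simp: bertrand_nonneg)
    finally show ?thesis .
  qed
  define K1 where "K1 = {k\<in>{..<N}. l \<le> Suc k}"
  define K2 where "K2 = {k\<in>{..<N}. \<not> l \<le> Suc k}"
  have K1: "(\<Sum>k\<in>K1. bertrand (Suc (nat_dist (Suc k) l))) = (\<Sum>k\<in>K1. bertrand (Suc (Suc k - l)))"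
    unfolding K1_def nat_dist_def by (intro sum.cong) auto
  have K2: "(\<Sum>k\<in>K2. bertrand (Suc (nat_dist (Suc k) l))) = (\<Sum>k\<in>K2. bertrand (Suc (l - Suc k)))"
    unfolding K2_def nat_dist_def by (intro sum.cong) auto
  have "{..<N} = K1 \<union> K2" "K1 \<inter> K2 = {}" unfolding K1_def K2_def by auto
  then have "(\<Sum>k<N. bertrand (Suc (nat_dist (Suc k) l)))
      = (\<Sum>k\<in>K1. bertrand (Suc (nat_dist (Suc k) l))) + (\<Sum>k\<in>K2. bertrand (Suc (nat_dist (Suc k) l)))"
    by (metis finite_Un finite_lessThan sum.union_disjoint)
  also have "\<dots> = (\<Sum>k\<in>K1. bertrand (Suc (Suc k - l))) + (\<Sum>k\<in>K2. bertrand (Suc (l - Suc k)))"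
    unfolding K1 K2 ..
  also have "\<dots> \<le> (\<Sum>m<Suc N. bertrand (Suc m)) + (\<Sum>m<l. bertrand (Suc m))"
  proof (rule add_mono)
    show "(\<Sum>k\<in>K1. bertrand (Suc (Suc k - l))) \<le> (\<Sum>m<Suc N. bertrand (Suc m))"
      by (rule reindex_le[where f="\<lambda>k. Suc k - l"]) (auto simp: K1_def inj_on_def)
    show "(\<Sum>k\<in>K2. bertrand (Suc (l - Suc k))) \<le> (\<Sum>m<l. bertrand (Suc m))"
      by (rule reindex_le[where f="\<lambda>k. l - Suc k"]) (auto simp: K2_def inj_on_def)
  qed
  also have "\<dots> \<le> 4"
    using sum_bertrand_le[of "Suc N"] sum_bertrand_le[of l] by simp
  finally show ?thesis .
qed

lemma inverse_one_plus_ln_sq_mult_le: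
  assumes k: "k \<ge> 1"
  shows "1 / ((one_plus_ln k)\<^sup>2 * (1 + real m)) \<le> 4 * bertrand (Suc m) + bertrand k"
proof (cases "1 + real m \<le> real k ^ 2")
  case True
  have "ln (1 + real m) \<le> ln (real k ^ 2)" using True k by simp
  also have "\<dots> = 2 * ln (real k)" using k by (simp add: ln_realpow)
  finally have "one_plus_ln (Suc m) \<le> 2 * one_plus_ln k"
    unfolding one_plus_ln_def using k by simp
  moreover have m1: "one_plus_ln (Suc m) \<ge> 1" using one_plus_ln_ge_one by simp
  ultimately have "(one_plus_ln (Suc m))\<^sup>2 \<le> (2 * one_plus_ln k)\<^sup>2"
    by (intro power_mono) auto
  then have "(one_plus_ln (Suc m))\<^sup>2 \<le> 4 * (one_plus_ln k)\<^sup>2"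
    by (simp add: power_mult_distrib)
  then have denom_le: "(one_plus_ln (Suc m))\<^sup>2 * (1 + real m) \<le> (4 * (one_plus_ln k)\<^sup>2) * (1 + real m)"
    by (intro mult_right_mono) auto
  have "1 / ((one_plus_ln k)\<^sup>2 * (1 + real m)) = 4 / ((4 * (one_plus_ln k)\<^sup>2) * (1 + real m))"
    by simp
  also have "\<dots> \<le> 4 / ((one_plus_ln (Suc m))\<^sup>2 * (1 + real m))"
    using m1 denom_le by (intro frac_le) auto
  also have "\<dots> = 4 * bertrand (Suc m)"
    unfolding bertrand_def by (simp add: mult.commute)
  finally show ?thesis using bertrand_nonneg[of k] by simp
next
  case False
  have "real k \<le> real k ^ 2" using k by (simp add: power2_eq_square)
  then have "real k \<le> 1 + real m" using False by linarith
  then have "1 / ((one_plus_ln k)\<^sup>2 * (1 + real m)) \<le> 1 / ((one_plus_ln k)\<^sup>2 * real k)"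
    using one_plus_ln_ge_one[OF k] k by (intro divide_left_mono mult_left_mono) auto
  also have "\<dots> = bertrand k"
    unfolding bertrand_def by (simp add: mult.commute)
  finally show ?thesis using bertrand_nonneg[of "Suc m"] by simp
qed

lemma weight_quotient_le:
  assumes b: "\<beta> \<ge> 1" and j: "j \<ge> 1" and k: "k \<ge> 1" and l: "l \<ge> 1"
  shows "weight \<beta> j l / (weight \<beta> j k * weight \<beta> k l)
         \<le> 4 * bertrand (Suc (nat_dist k j)) + 4 * bertrand (Suc (nat_dist k l)) + 2 * bertrand k"
proof -
  define a where "a = one_plus_ln j powr \<beta>"
  define c where "c = one_plus_ln l powr \<beta>"
  define p where "p = one_plus_ln k powr \<beta>"
  define q where "q = one_plus_ln k"
  define x where "x = 1 + real (nat_dist k j)"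
  define y where "y = 1 + real (nat_dist k l)"
  define z where "z = 1 + real (nat_dist j l)"
  have q1: "q \<ge> 1" using one_plus_ln_ge_one[OF k] q_def by simp
  have pq: "p \<ge> q"
    unfolding p_def q_def using powr_mono[OF b one_plus_ln_ge_one[OF k]] one_plus_ln_ge_one[OF k] by simp
  have a0: "a > 0" using one_plus_ln_ge_one[OF j] a_def by simp
  have c0: "c > 0" using one_plus_ln_ge_one[OF l] c_def by simp
  have x1: "x \<ge> 1" and y1: "y \<ge> 1" unfolding x_def y_def by auto
  have "weight \<beta> j l = a * c * z" "weight \<beta> j k = a * p * x" "weight \<beta> k l = p * c * y"
    unfolding weight_eq a_def c_def p_def x_def y_def z_def real_nat_dist
    by (simp_all add: abs_minus_commute)
  then have "weight \<beta> j l / (weight \<beta> j k * weight \<beta> k l) = z / (p * p * x * y)"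
    using a0 c0 by (simp add: field_simps)
  also have "\<dots> \<le> (x + y) / (q * q * x * y)"
  proof (rule frac_le)
    show "z \<le> x + y" unfolding x_def y_def z_def real_nat_dist by linarith
    show "q * q * x * y \<le> p * p * x * y"
      using q1 pq x1 y1 by (intro mult_right_mono mult_mono) auto
  qed (use q1 x1 y1 in auto)
  also have "\<dots> = 1 / (q\<^sup>2 * (1 + real (nat_dist k l))) + 1 / (q\<^sup>2 * (1 + real (nat_dist k j)))"
    using q1 x1 y1 unfolding x_def[symmetric] y_def[symmetric] by (simp add: field_simps power2_eq_square)
  also have "\<dots> \<le> (4 * bertrand (Suc (nat_dist k l)) + bertrand k) + (4 * bertrand (Suc (nat_dist k j)) + bertrand k)"
    unfolding q_def by (intro add_mono inverse_one_plus_ln_sq_mult_le k)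
  finally show ?thesis by simp
qed

lemma sum_inverse_weight_products_le:
  assumes b: "\<beta> \<ge> 1" and j: "j \<ge> 1" and l: "l \<ge> 1"
  shows "(\<Sum>k<N. 1 / (weight \<beta> j (Suc k) * weight \<beta> (Suc k) l)) \<le> 36 / weight \<beta> j l"
proof -
  define w where "w = weight \<beta> j l"
  have w0: "w > 0" unfolding w_def using weight_pos j l by simp
  have "(\<Sum>k<N. 1 / (weight \<beta> j (Suc k) * weight \<beta> (Suc k) l))
      = (1 / w) * (\<Sum>k<N. w / (weight \<beta> j (Suc k) * weight \<beta> (Suc k) l))"
    using w0 by (simp add: sum_distrib_left)
  also have "\<dots> \<le> (1 / w) * (\<Sum>k<N. 4 * bertrand (Suc (nat_dist (Suc k) j))
                    + 4 * bertrand (Suc (nat_dist (Suc k) l)) + 2 * bertrand (Suc k))"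
    using w0 unfolding w_def by (intro mult_left_mono sum_mono weight_quotient_le b j l) auto
  also have "\<dots> = (1 / w) * (4 * (\<Sum>k<N. bertrand (Suc (nat_dist (Suc k) j)))
                    + 4 * (\<Sum>k<N. bertrand (Suc (nat_dist (Suc k) l))) + 2 * (\<Sum>k<N. bertrand (Suc k)))"
    by (simp add: sum_distrib_left sum.distrib)
  also have "\<dots> \<le> (1 / w) * (4 * 4 + 4 * 4 + 2 * 2)"
    using w0 sum_bertrand_nat_dist_le[where N=N and l=j] sum_bertrand_nat_dist_le[where N=N and l=l] sum_bertrand_le[of N]
    by (intro mult_left_mono add_mono) auto
  finally show ?thesis unfolding w_def by simp
qed

lemma admissible_iff_mult_weight:
  "admissible \<beta> A c \<longleftrightarrow> (\<forall>i\<ge>1. \<forall>j\<ge>1. \<forall>\<xi>. hs_norm (A i j \<xi>) * weight \<beta> i j \<le> c)"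
  unfolding admissible_def using weight_pos by (auto simp: pos_le_divide_eq)

lemma admissible_nonneg:
  assumes "admissible \<beta> A c"
  shows "c \<ge> 0"
proof -
  have "0 \<le> hs_norm (A 1 1 \<xi>) * weight \<beta> 1 1" for \<xi>
    using weight_pos[of 1 1 \<beta>] by (simp add: hs_norm_eq_norm)
  also have "hs_norm (A 1 1 \<xi>) * weight \<beta> 1 1 \<le> c" for \<xi>
    using assms unfolding admissible_iff_mult_weight by simp
  finally show ?thesis .
qed

lemma M_norm_le: "admissible \<beta> A c \<Longrightarrow> M_norm \<beta> A \<le> c"
  unfolding M_norm_def by (rule cInf_lower) (auto intro: bdd_belowI[where m=0] admissible_nonneg)

lemma admissible_M_norm:
  assumes "in_M \<beta> A"
  shows "admissible \<beta> A (M_norm \<beta> A)"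
proof -
  have "{c. admissible \<beta> A c} \<noteq> {}" using assms unfolding in_M_def by auto
  then show ?thesis
    unfolding admissible_iff_mult_weight M_norm_def
    by (auto intro!: cInf_greatest simp: admissible_iff_mult_weight)
qed

lemma inf_mat_mult_entry:
  assumes b: "\<beta> \<ge> 1" and A: "in_M \<beta> A" and B: "in_M \<beta> B" and j: "j \<ge> 1" and l: "l \<ge> 1"
  shows "summable (\<lambda>k. A j (Suc k) \<xi> ** B (Suc k) l \<xi>)"
    and "hs_norm (inf_mat_mult A B j l \<xi>) \<le> 36 * M_norm \<beta> A * M_norm \<beta> B / weight \<beta> j l"
proof -
  define c where "c = M_norm \<beta> A * M_norm \<beta> B"
  define f where "f k = A j (Suc k) \<xi> ** B (Suc k) l \<xi>" for k
  define t where "t k = 1 / (weight \<beta> j (Suc k) * weight \<beta> (Suc k) l)" for k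
  have c0: "c \<ge> 0"
    unfolding c_def by (intro mult_nonneg_nonneg admissible_nonneg[OF admissible_M_norm] A B)
  have t0: "t k \<ge> 0" for k
    unfolding t_def using weight_pos j l by (simp add: less_imp_le)
  have t_sums: "(\<Sum>k<N. t k) \<le> 36 / weight \<beta> j l" for N
    unfolding t_def by (rule sum_inverse_weight_products_le[OF b j l])
  have t_summable: "summable t"
    by (rule summableI_nonneg_bounded[OF t0 t_sums])
  have f_le: "norm (f k) \<le> c * t k" for k
  proof -
    have "norm (f k) \<le> norm (A j (Suc k) \<xi>) * norm (B (Suc k) l \<xi>)"
      unfolding f_def by (rule norm_matrix_mult_le)
    also have "\<dots> \<le> (M_norm \<beta> A / weight \<beta> j (Suc k)) * (M_norm \<beta> B / weight \<beta> (Suc k) l)"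
      using admissible_M_norm[OF A] admissible_M_norm[OF B] j l
            admissible_nonneg[OF admissible_M_norm[OF A]] weight_pos[OF j, of "Suc k" \<beta>]
      unfolding admissible_def hs_norm_eq_norm by (intro mult_mono) auto
    finally show ?thesis unfolding c_def t_def by simp
  qed
  have norm_summable: "summable (\<lambda>k. norm (f k))"
    by (rule summable_comparison_test[OF _ summable_mult[OF t_summable]]) (use f_le in auto)
  then show "summable (\<lambda>k. A j (Suc k) \<xi> ** B (Suc k) l \<xi>)"
    unfolding f_def[symmetric] by (rule summable_norm_cancel)
  have "norm (\<Sum>k. f k) \<le> (\<Sum>k. norm (f k))"
    by (rule summable_norm[OF norm_summable])
  also have "\<dots> \<le> (\<Sum>k. c * t k)"
    by (rule suminf_le[OF f_le norm_summable summable_mult[OF t_summable]])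
  also have "\<dots> = c * (\<Sum>k. t k)"
    by (rule suminf_mult[OF t_summable])
  also have "\<dots> \<le> c * (36 / weight \<beta> j l)"
    using c0 by (intro mult_left_mono suminf_le_const[OF t_summable t_sums])
  finally show "hs_norm (inf_mat_mult A B j l \<xi>) \<le> 36 * M_norm \<beta> A * M_norm \<beta> B / weight \<beta> j l"
    unfolding inf_mat_mult_def hs_norm_eq_norm f_def c_def by (simp add: ac_simps)
qed

theorem lemma5p5:
  fixes n :: nat and \<beta> :: real
  assumes "n \<ge> 1" and "\<beta> \<ge> 2 * (real n + 2)"
  shows "\<exists>C. \<forall>A B :: 'p inf_mat. in_M \<beta> A \<and> in_M \<beta> B \<longrightarrow>
           (\<forall>j\<ge>1. \<forall>l\<ge>1. \<forall>\<xi>. summable (\<lambda>k. A j (Suc k) \<xi> ** B (Suc k) l \<xi>))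
         \<and> in_M \<beta> (inf_mat_mult A B)
         \<and> M_norm \<beta> (inf_mat_mult A B) \<le> C * M_norm \<beta> A * M_norm \<beta> B"
proof (intro exI[of _ 36] allI impI)
  have b: "\<beta> \<ge> 1" using assms by simp
  fix A B :: "'p inf_mat"
  assume "in_M \<beta> A \<and> in_M \<beta> B"
  then have A: "in_M \<beta> A" and B: "in_M \<beta> B" by auto
  have adm: "admissible \<beta> (inf_mat_mult A B) (36 * M_norm \<beta> A * M_norm \<beta> B)"
    unfolding admissible_def using inf_mat_mult_entry(2)[OF b A B] by blast
  then show "(\<forall>j\<ge>1. \<forall>l\<ge>1. \<forall>\<xi>. summable (\<lambda>k. A j (Suc k) \<xi> ** B (Suc k) l \<xi>))
         \<and> in_M \<beta> (inf_mat_mult A B)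
         \<and> M_norm \<beta> (inf_mat_mult A B) \<le> 36 * M_norm \<beta> A * M_norm \<beta> B"
    using inf_mat_mult_entry(1)[OF b A B] M_norm_le[OF adm] unfolding in_M_def by blast
qed

end
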